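(* Let $\chi:T\to\overline{\mathbf F}_p^\times$ be a smooth character, viewed as a character of $P$, and let $\pi$ be a smooth representation of $G$. If $\mathrm{Hom}_P(\chi,\pi)\neq0$, then $\chi$ extends uniquely to a character of $G$, and (for this extension) $\mathrm{Hom}_P(\chi,\pi)=\mathrm{Hom}_G(\chi,\pi)$.
   Context: $F$ non-Archimedean local field of residual characteristic $p$, $G=\mathrm{GL}_2(F)$, $P$ the upper triangular Borel subgroup, $U$ its unipotent radical, $T$ the diagonal torus; characters of $T$ are viewed as characters of $P$ via $P\to P/U\cong T$. Representations are smooth on $\overline{\mathbf F}_p$-vector spaces. *)

theory Defs
  imports Main "HOL-Computational_Algebra.Polynomial"
begin

text \<open>A discrete valuation v on F (values on nonzero elements only);
  vball v n = elements of valuation at least n (together with 0), i.e. the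
  fractional ideal generated by the n-th power of a uniformiser.\<close>

definition vball :: "('f::field \<Rightarrow> int) \<Rightarrow> int \<Rightarrow> 'f set" where
  "vball v n = {x. x = 0 \<or> v x \<ge> n}"

definition residue_classes :: "('f::field \<Rightarrow> int) \<Rightarrow> 'f set set" where
  "residue_classes v = (\<lambda>x. {y \<in> vball v 0. x - y \<in> vball v 1}) ` vball v 0"

definition nonarch_local_field :: "('f::field \<Rightarrow> int) \<Rightarrow> nat \<Rightarrow> bool" where
  "nonarch_local_field v p \<longleftrightarrow>
     prime p \<and>
     (\<forall>x y. x \<noteq> 0 \<longrightarrow> y \<noteq> 0 \<longrightarrow> v (x * y) = v x + v y) \<and>
     (\<forall>x y. x \<noteq> 0 \<longrightarrow> y \<noteq> 0 \<longrightarrow> x + y \<noteq> 0 \<longrightarrow> v (x + y) \<ge> min (v x) (v y)) \<and>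
     (\<exists>u. u \<noteq> 0 \<and> v u = 1) \<and>
     (\<forall>s :: nat \<Rightarrow> 'f.
        (\<forall>N. \<exists>M. \<forall>m\<ge>M. \<forall>n\<ge>M. s m - s n \<in> vball v N) \<longrightarrow>
        (\<exists>L. \<forall>N. \<exists>M. \<forall>n\<ge>M. s n - L \<in> vball v N)) \<and>
     finite (residue_classes v) \<and>
     of_nat p \<in> vball v 1"

definition is_Fpbar :: "nat \<Rightarrow> 'k::field itself \<Rightarrow> bool" where
  "is_Fpbar p _ \<longleftrightarrow>
     prime p \<and> (of_nat p :: 'k) = 0 \<and>
     (\<forall>q :: 'k poly. degree q > 0 \<longrightarrow> (\<exists>x. poly q x = 0)) \<and>
     (\<forall>x :: 'k. \<exists>q :: 'k poly. q \<noteq> 0 \<and> (\<forall>i. coeff q i \<in> range of_nat) \<and> poly q x = 0)"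

datatype 'f m2 = M2 'f 'f 'f 'f  \<comment> \<open>M2 a b c d = (a b; c d)\<close>

fun m2mul :: "'f::field m2 \<Rightarrow> 'f m2 \<Rightarrow> 'f m2" where
  "m2mul (M2 a b c d) (M2 a' b' c' d') =
     M2 (a*a' + b*c') (a*b' + b*d') (c*a' + d*c') (c*b' + d*d')"

definition m2one :: "'f::field m2" where "m2one = M2 1 0 0 1"

fun m2det :: "'f::field m2 \<Rightarrow> 'f" where "m2det (M2 a b c d) = a*d - b*c"

definition GL2 :: "'f::field m2 set" where "GL2 = {g. m2det g \<noteq> 0}"

definition Borel :: "'f::field m2 set" where
  "Borel = {M2 a b 0 d | a b d. a \<noteq> 0 \<and> d \<noteq> 0}"

fun m2diag :: "'f::field m2 \<Rightarrow> 'f \<times> 'f" where "m2diag (M2 a b c d) = (a, d)"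

text \<open>Principal congruence subgroups K_n = 1 + M_2(m^n), n \<ge> 1; they form a
  basis of open neighbourhoods of 1 in G.\<close>
definition congr_sub :: "('f::field \<Rightarrow> int) \<Rightarrow> nat \<Rightarrow> 'f m2 set" where
  "congr_sub v n = {M2 a b c d | a b c d. M2 a b c d \<in> GL2 \<and>
      a - 1 \<in> vball v (int n) \<and> b \<in> vball v (int n) \<and>
      c \<in> vball v (int n) \<and> d - 1 \<in> vball v (int n)}"

text \<open>A smooth representation of G on the k-vector space 'v (scalar
  multiplication scale); act g is only meaningful for g in GL2.\<close>
definition smooth_rep ::
  "('f::field \<Rightarrow> int) \<Rightarrow> ('k::field \<Rightarrow> 'v::ab_group_add \<Rightarrow> 'v) \<Rightarrow> ('f m2 \<Rightarrow> 'v \<Rightarrow> 'v) \<Rightarrow> bool" where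
  "smooth_rep v scale act \<longleftrightarrow>
     vector_space scale \<and>
     (\<forall>g\<in>GL2. Vector_Spaces.linear scale scale (act g)) \<and>
     (\<forall>w. act m2one w = w) \<and>
     (\<forall>g\<in>GL2. \<forall>h\<in>GL2. \<forall>w. act (m2mul g h) w = act g (act h w)) \<and>
     (\<forall>w. \<exists>n\<ge>1. \<forall>g\<in>congr_sub v n. act g w = w)"

text \<open>A smooth character chi of T = F^x \<times> F^x (chi a d = value on diag(a,d)).\<close>
definition smooth_char_T :: "('f::field \<Rightarrow> int) \<Rightarrow> ('f \<Rightarrow> 'f \<Rightarrow> 'k::field) \<Rightarrow> bool" where
  "smooth_char_T v chi \<longleftrightarrow>
     (\<forall>a d. a \<noteq> 0 \<longrightarrow> d \<noteq> 0 \<longrightarrow> chi a d \<noteq> 0) \<and>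
     (\<forall>a d a' d'. a \<noteq> 0 \<longrightarrow> d \<noteq> 0 \<longrightarrow> a' \<noteq> 0 \<longrightarrow> d' \<noteq> 0 \<longrightarrow>
        chi (a * a') (d * d') = chi a d * chi a' d') \<and>
     (\<exists>n\<ge>1. \<forall>a d. a \<noteq> 0 \<longrightarrow> d \<noteq> 0 \<longrightarrow> a - 1 \<in> vball v (int n) \<longrightarrow>
        d - 1 \<in> vball v (int n) \<longrightarrow> chi a d = 1)"

text \<open>chi viewed as a character of P via P \<rightarrow> P/U = T.\<close>
definition inflate :: "('f::field \<Rightarrow> 'f \<Rightarrow> 'k) \<Rightarrow> 'f m2 \<Rightarrow> 'k" where
  "inflate chi g = (case m2diag g of (a, d) \<Rightarrow> chi a d)"

definition char_G :: "('f::field m2 \<Rightarrow> 'k::field) \<Rightarrow> bool" where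
  "char_G psi \<longleftrightarrow> (\<forall>g\<in>GL2. psi g \<noteq> 0) \<and>
     (\<forall>g\<in>GL2. \<forall>h\<in>GL2. psi (m2mul g h) = psi g * psi h)"

text \<open>Hom_H(theta, pi) for a subgroup H and a character theta of H (on the
  one-dimensional space k): k-linear H-equivariant maps k \<rightarrow> V.\<close>
definition Hom_char ::
  "'f::field m2 set \<Rightarrow> ('f m2 \<Rightarrow> 'k::field) \<Rightarrow> ('k \<Rightarrow> 'v::ab_group_add \<Rightarrow> 'v) \<Rightarrow>
   ('f m2 \<Rightarrow> 'v \<Rightarrow> 'v) \<Rightarrow> ('k \<Rightarrow> 'v) set" where
  "Hom_char H theta scale act =
     {f. Vector_Spaces.linear (*) scale f \<and>
         (\<forall>g\<in>H. \<forall>x. f (theta g * x) = act g (f x))}"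

end

theory Submission imports Defs begin

text \<open>Write n(x) and u(x) for the lower and upper unipotent matrices. Every g \<in> GL2 is a product
  b n(x) b' with b, b' \<in> P. Let w \<noteq> 0 span a copy of \<chi> in \<pi>. By smoothness w is fixed by n(e)
  for some small e \<noteq> 0, and since diag(t\<inverse>, 1) n(e) diag(t, 1) = n(t e) while w is an eigenvector of
  the torus, w is fixed by every n(x). Hence G acts on w through any extension of \<chi>, and the
  factorisation (s\<inverse> 1; 0 s) = n(s - 1) u(1) n(s\<inverse> - 1) gives \<chi>(s\<inverse>, s) = 1, so \<chi> factors
  through the determinant, which provides an extension. Every character of G takes the same
  value on n(x) as on its conjugate u(x) under the Weyl element, so it is determined by its
  restriction to P.\<close>

lemma valuation_power:
  fixes v :: "'f::field \<Rightarrow> int"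
  assumes "\<forall>x y. x \<noteq> 0 \<longrightarrow> y \<noteq> 0 \<longrightarrow> v (x * y) = v x + v y" and "x \<noteq> 0"
  shows "v (x ^ Suc n) = int (Suc n) * v x"
proof (induction n)
  case (Suc n)
  have "v (x ^ Suc (Suc n)) = v x + v (x ^ Suc n)"
    using assms by simp
  with Suc show ?case
    by (simp add: algebra_simps)
qed simp

lemma nonarch_local_field_obtain_small:
  assumes "nonarch_local_field v p"
  obtains e where "e \<noteq> 0" "e \<in> vball v (int n)"
proof -
  obtain u where u: "u \<noteq> 0" "v u = 1" and mult: "\<forall>x y. x \<noteq> 0 \<longrightarrow> y \<noteq> 0 \<longrightarrow> v (x * y) = v x + v y"
    using assms unfolding nonarch_local_field_def by blast
  have "v (u ^ Suc n) = int (Suc n)"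
    using valuation_power[OF mult u(1)] u(2) by simp
  then show ?thesis
    using that[of "u ^ Suc n"] u(1) by (simp add: vball_def)
qed

lemma m2det_m2mul: "m2det (m2mul g h) = m2det g * m2det h"
  by (cases g; cases h) (simp add: algebra_simps)

lemma GL2_m2mul: "g \<in> GL2 \<Longrightarrow> h \<in> GL2 \<Longrightarrow> m2mul g h \<in> GL2"
  unfolding GL2_def by (simp add: m2det_m2mul)

lemma M2_in_Borel_iff: "M2 a b c d \<in> Borel \<longleftrightarrow> c = 0 \<and> a \<noteq> 0 \<and> d \<noteq> 0"
  unfolding Borel_def by auto

lemma Borel_subset_GL2: "Borel \<subseteq> GL2"
  unfolding Borel_def GL2_def by auto

lemma lower_unipotent_in_GL2: "M2 1 0 x 1 \<in> GL2"
  unfolding GL2_def by simp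

lemma lower_unipotent_in_congr_sub: "e \<in> vball v (int n) \<Longrightarrow> M2 1 0 e 1 \<in> congr_sub v n"
  unfolding congr_sub_def using lower_unipotent_in_GL2 by (auto simp: vball_def)

lemma GL2_Borel_lower_Borel:
  assumes "g \<in> GL2"
  obtains b x b' where "b \<in> Borel" "b' \<in> Borel" "g = m2mul b (m2mul (M2 1 0 x 1) b')"
proof (cases g)
  case (M2 a b c d)
  have det: "a * d - b * c \<noteq> 0"
    using assms M2 unfolding GL2_def by simp
  show ?thesis
  proof (cases "a = 0")
    case False
    have g: "g = m2mul (M2 1 0 0 1) (m2mul (M2 1 0 (c/a) 1) (M2 a b 0 (d - b*c/a)))"
      using False M2 by (simp add: field_simps)
    have "d - b*c/a \<noteq> 0"
      using False det by (simp add: field_simps)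
    with False show ?thesis
      by (intro that[OF _ _ g]) (simp_all add: M2_in_Borel_iff)
  next
    case True
    have g: "g = m2mul (M2 1 (-1) 0 1) (m2mul (M2 1 0 1 1) (M2 c (b+d) 0 (-b)))"
      using True M2 by (simp add: field_simps)
    have "b \<noteq> 0" "c \<noteq> 0"
      using True det by auto
    then show ?thesis
      by (intro that[OF _ _ g]) (simp_all add: M2_in_Borel_iff)
  qed
qed

lemma smooth_char_T_mult:
  "smooth_char_T v chi \<Longrightarrow> a \<noteq> 0 \<Longrightarrow> d \<noteq> 0 \<Longrightarrow> a' \<noteq> 0 \<Longrightarrow> d' \<noteq> 0 \<Longrightarrow>
    chi (a * a') (d * d') = chi a d * chi a' d'"
  unfolding smooth_char_T_def by blast

lemma smooth_char_T_nonzero: "smooth_char_T v chi \<Longrightarrow> a \<noteq> 0 \<Longrightarrow> d \<noteq> 0 \<Longrightarrow> chi a d \<noteq> 0"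
  unfolding smooth_char_T_def by blast

lemma smooth_char_T_one: "smooth_char_T v chi \<Longrightarrow> chi 1 1 = 1"
  using smooth_char_T_mult[of v chi 1 1 1 1] smooth_char_T_nonzero[of v chi 1 1] by simp

lemma smooth_char_T_inverse:
  "smooth_char_T v chi \<Longrightarrow> a \<noteq> 0 \<Longrightarrow> d \<noteq> 0 \<Longrightarrow> chi a d * chi (1/a) (1/d) = 1"
  using smooth_char_T_mult[of v chi a d "1/a" "1/d"] smooth_char_T_one[of v chi] by simp

lemma inflate_M2: "inflate chi (M2 a b c d) = chi a d"
  unfolding inflate_def by simp

definition det_char :: "('f::field \<Rightarrow> 'f \<Rightarrow> 'k) \<Rightarrow> 'f m2 \<Rightarrow> 'k" where
  "det_char chi g = chi (m2det g) 1"

lemma char_G_det_char: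
  fixes chi :: "'f::field \<Rightarrow> 'f \<Rightarrow> 'k::field"
  assumes "smooth_char_T v chi"
  shows "char_G (det_char chi)"
  unfolding char_G_def det_char_def
proof (intro conjI ballI)
  fix g h :: "'f m2"
  assume "g \<in> GL2" "h \<in> GL2"
  then show "chi (m2det (m2mul g h)) 1 = chi (m2det g) 1 * chi (m2det h) 1"
    using smooth_char_T_mult[OF assms, of "m2det g" 1 "m2det h" 1]
    by (simp add: m2det_m2mul GL2_def)
next
  fix g :: "'f m2"
  assume "g \<in> GL2"
  then show "chi (m2det g) 1 \<noteq> 0"
    using smooth_char_T_nonzero[OF assms] by (simp add: GL2_def)
qed

lemma det_char_eq_inflate:
  assumes "\<And>a d. a \<noteq> 0 \<Longrightarrow> d \<noteq> 0 \<Longrightarrow> chi a d = chi (a * d) 1" and "g \<in> Borel"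
  shows "det_char chi g = inflate chi g"
proof -
  obtain a b d where "g = M2 a b 0 d" "a \<noteq> 0" "d \<noteq> 0"
    using \<open>g \<in> Borel\<close> unfolding Borel_def by blast
  then show ?thesis
    using assms(1)[of a d] by (simp add: det_char_def inflate_M2)
qed

lemma char_G_m2mul: "char_G psi \<Longrightarrow> g \<in> GL2 \<Longrightarrow> h \<in> GL2 \<Longrightarrow> psi (m2mul g h) = psi g * psi h"
  unfolding char_G_def by blast

lemma char_G_lower_unipotent_eq_upper:
  assumes "char_G psi"
  shows "psi (M2 1 0 x 1) = psi (M2 1 x 0 1)"
proof -
  have W: "M2 0 1 1 0 \<in> GL2" and U: "M2 1 x 0 1 \<in> GL2"
    by (simp_all add: GL2_def)
  have "m2mul (M2 0 1 1 0) (M2 1 0 x 1) = m2mul (M2 1 x 0 1) (M2 0 1 1 0)"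
    by simp
  then have "psi (M2 0 1 1 0) * psi (M2 1 0 x 1) = psi (M2 1 x 0 1) * psi (M2 0 1 1 0)"
    using char_G_m2mul[OF assms W lower_unipotent_in_GL2] char_G_m2mul[OF assms U W] by metis
  moreover have "psi (M2 0 1 1 0) \<noteq> 0"
    using assms W unfolding char_G_def by blast
  ultimately show ?thesis
    by (simp add: mult.commute)
qed

lemma char_G_Bruhat_product:
  assumes "char_G psi" "b \<in> GL2" "b' \<in> GL2"
  shows "psi (m2mul b (m2mul (M2 1 0 x 1) b')) = psi b * psi (M2 1 x 0 1) * psi b'"
proof -
  have "psi (m2mul b (m2mul (M2 1 0 x 1) b')) = psi b * (psi (M2 1 0 x 1) * psi b')"
    using char_G_m2mul[OF assms(1,2) GL2_m2mul[OF lower_unipotent_in_GL2 assms(3)]]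
      char_G_m2mul[OF assms(1) lower_unipotent_in_GL2 assms(3)] by simp
  then show ?thesis
    by (simp add: char_G_lower_unipotent_eq_upper[OF assms(1)] mult.assoc)
qed

lemma char_G_determined_by_Borel:
  assumes "char_G psi1" "char_G psi2" "\<forall>g\<in>Borel. psi1 g = psi2 g" and "g \<in> GL2"
  shows "psi1 g = psi2 g"
proof -
  obtain b x b' where b: "b \<in> Borel" "b' \<in> Borel" and g: "g = m2mul b (m2mul (M2 1 0 x 1) b')"
    using GL2_Borel_lower_Borel[OF \<open>g \<in> GL2\<close>] .
  have "M2 1 x 0 1 \<in> Borel"
    by (simp add: M2_in_Borel_iff)
  moreover have "b \<in> GL2" "b' \<in> GL2"
    using b Borel_subset_GL2 by blast+
  ultimately show ?thesis
    using b assms(3) unfolding g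
    by (simp add: char_G_Bruhat_product[OF assms(1)] char_G_Bruhat_product[OF assms(2)])
qed

lemma inflate_extension_lower_unipotent:
  assumes "smooth_char_T v chi" "char_G psi" "\<forall>g\<in>Borel. psi g = inflate chi g"
  shows "psi (M2 1 0 x 1) = 1"
  using assms char_G_lower_unipotent_eq_upper[OF assms(2)]
  by (simp add: M2_in_Borel_iff inflate_M2 smooth_char_T_one)

definition transforms_by ::
  "'f::field m2 set \<Rightarrow> ('f m2 \<Rightarrow> 'k::field) \<Rightarrow> ('k \<Rightarrow> 'v::ab_group_add \<Rightarrow> 'v) \<Rightarrow>
   ('f m2 \<Rightarrow> 'v \<Rightarrow> 'v) \<Rightarrow> 'v \<Rightarrow> bool" where
  "transforms_by H theta scale act w \<longleftrightarrow> (\<forall>g\<in>H. act g w = scale (theta g) w)"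

lemma linear_scale_apply: "Vector_Spaces.linear s1 s2 f \<Longrightarrow> f (s1 r x) = s2 r (f x)"
  unfolding linear_iff_module_hom by (rule module_hom.scale)

lemma Hom_char_iff:
  assumes vs: "vector_space scale" and lin: "\<forall>g\<in>H. Vector_Spaces.linear scale scale (act g)"
  shows "f \<in> Hom_char H theta scale act \<longleftrightarrow>
    Vector_Spaces.linear (*) scale f \<and> transforms_by H theta scale act (f 1)"
proof (cases "Vector_Spaces.linear (*) scale f")
  case True
  interpret vector_space scale by (rule vs)
  obtain w where f: "f = (\<lambda>x. scale x w)"
    using linear_imp_scale[OF True] .
  have "act g (scale x w) = scale x (act g w)" if "g \<in> H" for g x
    using linear_scale_apply[of scale scale "act g"] lin that by blast
  then have "(\<forall>x. scale (theta g * x) w = act g (scale x w)) \<longleftrightarrow> act g w = scale (theta g) w"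
    if "g \<in> H" for g
    using that by (metis mult.commute mult_1_right scale_one scale_scale)
  then show ?thesis
    using True unfolding Hom_char_def transforms_by_def f by simp
qed (simp add: Hom_char_def)

lemma Hom_char_nonzero_obtain_transforms_by:
  assumes vs: "vector_space scale" and lin: "\<forall>g\<in>H. Vector_Spaces.linear scale scale (act g)"
    and "f \<in> Hom_char H theta scale act" "f \<noteq> (\<lambda>_. 0)"
  obtains w where "w \<noteq> 0" "transforms_by H theta scale act w"
proof -
  interpret vector_space scale by (rule vs)
  have f_lin: "Vector_Spaces.linear (*) scale f" and "transforms_by H theta scale act (f 1)"
    using assms(3) Hom_char_iff[OF vs lin] by blast+
  moreover obtain w where f: "f = (\<lambda>x. scale x w)"
    using linear_imp_scale[OF f_lin] .
  moreover have "w \<noteq> 0"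
    using assms(4) by (auto simp: f)
  ultimately show ?thesis
    using that by simp
qed

lemma Hom_char_eqI:
  assumes vs: "vector_space scale"
    and lin: "\<forall>g\<in>H. Vector_Spaces.linear scale scale (act g)"
      "\<forall>g\<in>H'. Vector_Spaces.linear scale scale (act g)"
    and "\<And>w. transforms_by H theta scale act w \<longleftrightarrow> transforms_by H' theta' scale act w"
  shows "Hom_char H theta scale act = Hom_char H' theta' scale act"
  using Hom_char_iff[OF vs lin(1)] Hom_char_iff[OF vs lin(2)] assms(4) by blast

lemma smooth_rep_vector_space: "smooth_rep v scale act \<Longrightarrow> vector_space scale"
  unfolding smooth_rep_def by blast

lemma smooth_rep_linear:
  "smooth_rep v scale act \<Longrightarrow> g \<in> GL2 \<Longrightarrow> Vector_Spaces.linear scale scale (act g)"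
  unfolding smooth_rep_def by blast

lemma smooth_rep_act_scale:
  "smooth_rep v scale act \<Longrightarrow> g \<in> GL2 \<Longrightarrow> act g (scale r w) = scale r (act g w)"
  using linear_scale_apply[OF smooth_rep_linear] by blast

lemma smooth_rep_act_m2mul:
  "smooth_rep v scale act \<Longrightarrow> g \<in> GL2 \<Longrightarrow> h \<in> GL2 \<Longrightarrow> act (m2mul g h) w = act g (act h w)"
  unfolding smooth_rep_def by blast

lemma smooth_rep_act_one: "smooth_rep v scale act \<Longrightarrow> act (M2 1 0 0 1) w = w"
  unfolding smooth_rep_def m2one_def by blast

lemma smooth_rep_fixed_by_congr_sub:
  assumes "smooth_rep v scale act"
  obtains n where "\<forall>g\<in>congr_sub v n. act g w = w"
  using assms unfolding smooth_rep_def by blast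

lemma smooth_rep_act_m2mul3:
  assumes "smooth_rep v scale act" "g \<in> GL2" "h \<in> GL2" "k \<in> GL2"
  shows "act (m2mul g (m2mul h k)) w = act g (act h (act k w))"
  using assms by (simp add: smooth_rep_act_m2mul GL2_m2mul)

lemma transforms_by_Borel_lower_unipotent:
  assumes F: "nonarch_local_field v p" and pi: "smooth_rep v scale act"
    and chi: "smooth_char_T v chi" and w: "transforms_by Borel (inflate chi) scale act w"
  shows "act (M2 1 0 c 1) w = w"
proof (cases "c = 0")
  case True
  then show ?thesis
    using smooth_rep_act_one[OF pi] by simp
next
  case False
  interpret vector_space scale
    using smooth_rep_vector_space[OF pi] .
  obtain n where fixed: "\<forall>g\<in>congr_sub v n. act g w = w"
    using smooth_rep_fixed_by_congr_sub[OF pi] .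
  obtain e where e: "e \<noteq> 0" "e \<in> vball v (int n)"
    using nonarch_local_field_obtain_small[OF F] .
  define t where "t = c / e"
  have t: "t \<noteq> 0"
    using False e(1) by (simp add: t_def)
  have conj: "M2 1 0 c 1 = m2mul (M2 (1/t) 0 0 1) (m2mul (M2 1 0 e 1) (M2 t 0 0 1))"
    using t e(1) by (simp add: t_def field_simps)
  have B: "M2 (1/t) 0 0 1 \<in> Borel" "M2 t 0 0 1 \<in> Borel"
    using t by (simp_all add: M2_in_Borel_iff)
  then have GL: "M2 (1/t) 0 0 1 \<in> GL2" "M2 t 0 0 1 \<in> GL2"
    using Borel_subset_GL2 by blast+
  from B have eig: "act (M2 (1/t) 0 0 1) w = scale (chi (1/t) 1) w" "act (M2 t 0 0 1) w = scale (chi t 1) w"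
    using w unfolding transforms_by_def by (simp_all add: inflate_M2)
  have "act (M2 1 0 c 1) w = act (M2 (1/t) 0 0 1) (act (M2 1 0 e 1) (act (M2 t 0 0 1) w))"
    unfolding conj by (rule smooth_rep_act_m2mul3[OF pi GL(1) lower_unipotent_in_GL2 GL(2)])
  also have "\<dots> = scale (chi t 1 * chi (1/t) 1) w"
    using GL fixed lower_unipotent_in_congr_sub[OF e(2)]
    by (simp add: smooth_rep_act_scale[OF pi] lower_unipotent_in_GL2 eig)
  also have "\<dots> = w"
    using smooth_char_T_inverse[OF chi t, of 1] by simp
  finally show ?thesis .
qed

lemma transforms_by_Borel_factors_through_det:
  assumes F: "nonarch_local_field v p" and pi: "smooth_rep v scale act"
    and chi: "smooth_char_T v chi" and w: "transforms_by Borel (inflate chi) scale act w"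
    and "w \<noteq> 0" "a \<noteq> 0" "d \<noteq> 0"
  shows "chi a d = chi (a * d) 1"
proof -
  interpret vector_space scale
    using smooth_rep_vector_space[OF pi] .
  have dec: "M2 (1/d) 1 0 d = m2mul (M2 1 0 (d - 1) 1) (m2mul (M2 1 1 0 1) (M2 1 0 (1/d - 1) 1))"
    using \<open>d \<noteq> 0\<close> by (simp add: field_simps)
  have B: "M2 (1/d) 1 0 d \<in> Borel" "M2 1 1 0 1 \<in> Borel"
    using \<open>d \<noteq> 0\<close> by (simp_all add: M2_in_Borel_iff)
  have U: "M2 1 1 0 1 \<in> GL2"
    using B(2) Borel_subset_GL2 by blast
  have "scale (chi (1/d) d) w = act (M2 (1/d) 1 0 d) w"
    using w B unfolding transforms_by_def by (simp add: inflate_M2)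
  also have "\<dots> = act (M2 1 0 (d - 1) 1) (act (M2 1 1 0 1) (act (M2 1 0 (1/d - 1) 1) w))"
    unfolding dec by (rule smooth_rep_act_m2mul3[OF pi lower_unipotent_in_GL2 U lower_unipotent_in_GL2])
  also have "\<dots> = w"
    using w[unfolded transforms_by_def, rule_format, OF B(2)]
      transforms_by_Borel_lower_unipotent[OF F pi chi w] smooth_char_T_one[OF chi]
    by (simp add: inflate_M2)
  finally have "scale (chi (1/d) d) w = scale 1 w"
    by simp
  then have "chi (1/d) d = 1"
    by (rule scale_right_imp_eq[OF \<open>w \<noteq> 0\<close>])
  moreover have "chi (a * d * (1/d)) (1 * d) = chi (a * d) 1 * chi (1/d) d"
    using smooth_char_T_mult[OF chi, of "a * d" 1 "1/d" d] assms(6,7) by simp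
  ultimately show ?thesis
    using assms(7) by simp
qed

lemma transforms_by_Borel_iff_GL2:
  fixes psi :: "'f::field m2 \<Rightarrow> 'k::field"
  assumes F: "nonarch_local_field v p" and pi: "smooth_rep v scale act"
    and chi: "smooth_char_T v chi"
    and psi: "char_G psi" "\<forall>g\<in>Borel. psi g = inflate chi g"
  shows "transforms_by Borel (inflate chi) scale act w \<longleftrightarrow> transforms_by GL2 psi scale act w"
proof
  assume w: "transforms_by Borel (inflate chi) scale act w"
  interpret vector_space scale
    using smooth_rep_vector_space[OF pi] .
  show "transforms_by GL2 psi scale act w"
    unfolding transforms_by_def
  proof
    fix g :: "'f m2"
    assume "g \<in> GL2"
    then obtain b x b' where b: "b \<in> Borel" "b' \<in> Borel" and g: "g = m2mul b (m2mul (M2 1 0 x 1) b')"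
      by (rule GL2_Borel_lower_Borel)
    have GL: "b \<in> GL2" "b' \<in> GL2"
      using b Borel_subset_GL2 by blast+
    have "act g w = act b (act (M2 1 0 x 1) (scale (psi b') w))"
      using w b psi(2) GL unfolding g transforms_by_def
      by (simp add: smooth_rep_act_m2mul3[OF pi] lower_unipotent_in_GL2)
    also have "\<dots> = scale (psi b * psi b') w"
      using w b psi(2) GL transforms_by_Borel_lower_unipotent[OF F pi chi w]
      unfolding transforms_by_def
      by (simp add: smooth_rep_act_scale[OF pi] lower_unipotent_in_GL2 mult.commute)
    also have "\<dots> = scale (psi g) w"
      using inflate_extension_lower_unipotent[OF chi psi] char_G_Bruhat_product[OF psi(1) GL]
        char_G_lower_unipotent_eq_upper[OF psi(1)] g by simp
    finally show "act g w = scale (psi g) w" .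
  qed
next
  assume "transforms_by GL2 psi scale act w"
  then show "transforms_by Borel (inflate chi) scale act w"
    using psi(2) Borel_subset_GL2 unfolding transforms_by_def by auto
qed

theorem lemma5p1:
  fixes v :: "'f::field \<Rightarrow> int" and p :: nat
    and chi :: "'f \<Rightarrow> 'f \<Rightarrow> 'k::field"
    and scale :: "'k \<Rightarrow> 'v::ab_group_add \<Rightarrow> 'v"
    and act :: "'f m2 \<Rightarrow> 'v \<Rightarrow> 'v"
  assumes F: "nonarch_local_field v p"
    and k: "is_Fpbar p TYPE('k)"
    and chi: "smooth_char_T v chi"
    and pi: "smooth_rep v scale act"
    and nz: "\<exists>f\<in>Hom_char Borel (inflate chi) scale act. f \<noteq> (\<lambda>_. 0)"
  shows "(\<exists>psi. char_G psi \<and> (\<forall>g\<in>Borel. psi g = inflate chi g)) \<and>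
         (\<forall>psi1 psi2. char_G psi1 \<and> (\<forall>g\<in>Borel. psi1 g = inflate chi g) \<and>
                      char_G psi2 \<and> (\<forall>g\<in>Borel. psi2 g = inflate chi g) \<longrightarrow>
                      (\<forall>g\<in>GL2. psi1 g = psi2 g)) \<and>
         (\<forall>psi. char_G psi \<and> (\<forall>g\<in>Borel. psi g = inflate chi g) \<longrightarrow>
                Hom_char Borel (inflate chi) scale act = Hom_char GL2 psi scale act)"
proof -
  have vs: "vector_space scale"
    using smooth_rep_vector_space[OF pi] .
  have lin: "\<forall>g\<in>H. Vector_Spaces.linear scale scale (act g)" if "H \<subseteq> GL2" for H
    using that smooth_rep_linear[OF pi] by blast
  obtain w where "w \<noteq> 0" and w: "transforms_by Borel (inflate chi) scale act w"
    using nz Hom_char_nonzero_obtain_transforms_by[OF vs lin[OF Borel_subset_GL2]] by blast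
  then have "chi a d = chi (a * d) 1" if "a \<noteq> 0" "d \<noteq> 0" for a d
    using transforms_by_Borel_factors_through_det[OF F pi chi w] that by blast
  then have "char_G (det_char chi) \<and> (\<forall>g\<in>Borel. det_char chi g = inflate chi g)"
    using char_G_det_char[OF chi] det_char_eq_inflate[of chi] by blast
  moreover have "\<forall>g\<in>GL2. psi1 g = psi2 g"
    if "char_G psi1" "\<forall>g\<in>Borel. psi1 g = inflate chi g" "char_G psi2" "\<forall>g\<in>Borel. psi2 g = inflate chi g"
    for psi1 psi2
    using char_G_determined_by_Borel[of psi1 psi2] that by simp
  moreover have "Hom_char Borel (inflate chi) scale act = Hom_char GL2 psi scale act"
    if "char_G psi" "\<forall>g\<in>Borel. psi g = inflate chi g" for psi
    using Hom_char_eqI[OF vs lin[OF Borel_subset_GL2] lin[OF order_refl]]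
      transforms_by_Borel_iff_GL2[OF F pi chi that] by blast
  ultimately show ?thesis
    by blast
qed

end
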